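(* Let $M,K\ge1$, $\mathbf{H}=[\mathbf{h}_{:1},\dots,\mathbf{h}_{:K}]\in\mathbb{C}^{M\times K}$, $P>0$, $N_0>0$, and suppose all users transmit at the same rate, $r_k=r_G$ for all $k\in\{1,\dots,K\}$. Consider the successive interference cancellation (SIC) decoding order $i_1\to i_2\to\cdots\to i_K$ constructed greedily as follows: for $u=1,\dots,K$, with $U_u=\{1,\dots,K\}\setminus\{i_1,\dots,i_{u-1}\}$ the set of not-yet-decoded users, choose $i_u\in U_u$ maximizing the signal-to-interference-plus-noise rate $R_{k}^{U_u\setminus\{k\}}$ over $k\in U_u$ (i.e., decode the user with the highest SINR at each step). Then this decoding order maximizes $|S^*_{\mathrm{SIC}}|$ over all permutations of $\{1,\dots,K\}$.
   Context: For a set $A\subseteq\{1,\dots,K\}$, $\mathbf{H}_{:A}$ is the submatrix of $\mathbf{H}$ with columns $\{\mathbf{h}_{:k}:k\in A\}$ (zero contribution if $A=\emptyset$); $\mathrm H$ denotes conjugate transpose. For a user $x$ and set $Y$, $R_x^{Y}=\log_2\det\big(\mathbf{I}_M+\frac{P}{N_0}\mathbf{h}_{:x}\mathbf{h}_{:x}^{\mathrm H}(\mathbf{I}_M+\frac{P}{N_0}\mathbf{H}_{:Y}\mathbf{H}_{:Y}^{\mathrm H})^{-1}\big)$. For a decoding order (permutation) $i_1\to\cdots\to i_K$, let $T_u=\{i_k:k>u\}$ and define $S^*_{\mathrm{SIC}}=\{i_1,\dots,i_{u^*-1}\}$ where $u^*$ is the smallest $u\in\{1,\dots,K\}$ with $r_{i_u}>R_{i_u}^{T_u}$,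 and $u^*=K+1$ if no such $u$ exists. Thus $S^*_{\mathrm{SIC}}$ is the set of users successfully decoded by SIC in that order before the first failure. The setting is a Gaussian multiple-access channel $\mathbf{y}=\mathbf{H}\mathbf{x}+\mathbf{z}$ with $K$ single-antenna transmitters of power $P$, an $M$-antenna receiver, and noise $\mathcal{CN}(0,N_0\mathbf{I}_M)$. *)

theory Defs
  imports "HOL-Analysis.Analysis"
begin

text \<open>Channel matrix H :: complex^'k^'m  (M = CARD('m) receive antennas as rows,
  K = CARD('k) users as columns).  Column k of H is h_{:k}.\<close>

definition chan_col :: "complex^'k^'m \<Rightarrow> 'k \<Rightarrow> complex^'m" where
  "chan_col H k = (\<chi> i. H $ i $ k)"

definition outer_H :: "complex^'m \<Rightarrow> complex^'m^'m" where
  "outer_H v = (\<chi> i j. v $ i * cnj (v $ j))"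

definition gram_sub :: "complex^'k^'m \<Rightarrow> 'k set \<Rightarrow> complex^'m^'m" where
  "gram_sub H Y = (\<Sum>k\<in>Y. outer_H (chan_col H k))"

text \<open>R_x^Y = log2 det(I + (P/N0) h_x h_x^H (I + (P/N0) H_Y H_Y^H)^{-1}).
  The determinant is a positive real number; we take its real part.\<close>
definition rate :: "real \<Rightarrow> real \<Rightarrow> complex^'k^'m \<Rightarrow> 'k \<Rightarrow> 'k set \<Rightarrow> real" where
  "rate P N0 H x Y =
     log 2 (Re (det (mat 1 + (P / N0) *\<^sub>R
        (outer_H (chan_col H x) ** matrix_inv (mat 1 + (P / N0) *\<^sub>R gram_sub H Y)))))"

fun sic_decoded :: "('k \<Rightarrow> real) \<Rightarrow> ('k \<Rightarrow> 'k set \<Rightarrow> real) \<Rightarrow> 'k list \<Rightarrow> 'k list" where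
  "sic_decoded r R [] = []"
| "sic_decoded r R (x # xs) =
     (if r x \<le> R x (set xs) then x # sic_decoded r R xs else [])"

definition S_SIC :: "('k \<Rightarrow> real) \<Rightarrow> ('k \<Rightarrow> 'k set \<Rightarrow> real) \<Rightarrow> 'k list \<Rightarrow> 'k set" where
  "S_SIC r R ord = set (sic_decoded r R ord)"

definition is_order :: "'k::finite list \<Rightarrow> bool" where
  "is_order ord \<longleftrightarrow> distinct ord \<and> set ord = UNIV"

definition greedy_order :: "('k \<Rightarrow> 'k set \<Rightarrow> real) \<Rightarrow> 'k::finite list \<Rightarrow> bool" where
  "greedy_order R ord \<longleftrightarrow> is_order ord \<and>
     (\<forall>u < length ord. \<forall>k \<in> UNIV - set (take u ord).
        R k (UNIV - set (take u ord) - {k}) \<le>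
        R (ord ! u) (UNIV - set (take u ord) - {ord ! u}))"

end

theory Submission
  imports Defs
begin

text \<open>
  By the matrix determinant lemma, \<open>R\<^sub>x\<^sup>Y = log 2 (1 + (P/N0) h\<^sub>x\<^sup>H A\<^sub>Y\<inverse> h\<^sub>x)\<close> with
  \<open>A\<^sub>Y = I + (P/N0) H\<^sub>Y H\<^sub>Y\<^sup>H\<close>. Enlarging \<open>Y\<close> adds a positive semidefinite term to
  \<open>A\<^sub>Y\<close>, which can only decrease the quadratic form of its inverse, so every rate is
  antitone in the interference set.

  With equal target rates an exchange argument finishes the proof. Suppose an order \<open>\<sigma>\<close>
  decodes \<open>s\<close> users and let \<open>u < s\<close>. Among the first \<open>s\<close> users of \<open>\<sigma>\<close>, the first one
  not chosen in the first \<open>u\<close> greedy steps was decoded against a superset of the users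
  still undecoded at greedy step \<open>u\<close>, so it meets the target rate there, and hence so does
  the greedy choice.
\<close>

lemma det_replace_row_of_identity:
  fixes w :: "'a::field^'n"
  shows "det (\<chi> i. if i = k then w else axis i 1) = w $ k"
proof -
  have rows: "row i (mat 1 :: 'a^'n^'n) = axis i 1" for i
    by (simp add: row_def mat_def axis_def vec_eq_iff)
  have expand: "(\<Sum>i\<in>UNIV. w $ i *s axis i (1::'a)) = w"
    by (simp add: vec_eq_iff sum_component axis_def if_distrib cong: if_cong)
  show ?thesis
    using cramer_lemma_transpose[of k w "mat 1 :: 'a^'n^'n"] unfolding rows expand by simp
qed

lemma det_add_multiples_of_row:
  fixes a :: "'n::finite \<Rightarrow> 'a::comm_ring_1^'n"
  assumes "finite T" "k \<notin> T"
  shows "det (\<chi> i. if i \<in> T then a i + c i *s a k else a i) = det (\<chi> i. a i)"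
  using assms
proof (induction T rule: finite_induct)
  case (insert j T)
  let ?A = "\<chi> i. if i \<in> T then a i + c i *s a k else a i"
  have "j \<noteq> k" "row j ?A = a j" "row k ?A = a k"
    using insert by (auto simp: row_def)
  then have "(\<chi> i. if i \<in> insert j T then a i + c i *s a k else a i)
      = (\<chi> i. if i = j then row j ?A + c j *s row k ?A else row i ?A)"
    by (simp add: vec_eq_iff row_def)
  then show ?case
    using det_row_operation[OF \<open>j \<noteq> k\<close>, of ?A "c j"] insert by simp
qed simp

lemma det_identity_plus_rank_one:
  fixes u w :: "'a::field^'n"
  shows "det (mat 1 + (\<chi> i j. u $ i * w $ j)) = 1 + (\<Sum>i\<in>UNIV. u $ i * w $ i)"
proof -
  have rank_one_rows: "det (\<chi> i. if i \<in> T then axis i 1 + u $ i *s w else axis i 1)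
      = 1 + (\<Sum>i\<in>T. u $ i * w $ i)" if "finite T" for T
    using that
  proof (induction T rule: finite_induct)
    case empty
    have "(\<chi> i. axis i 1) = (mat 1 :: 'a^'n^'n)"
      by (simp add: vec_eq_iff mat_def axis_def)
    then show ?case by simp
  next
    case (insert k T)
    let ?a = "\<lambda>i. if i = k then w else axis i 1"
    let ?rest = "\<lambda>i. if i \<in> T then axis i 1 + u $ i *s w else axis i (1::'a)"
    have "det (\<chi> i. if i \<in> insert k T then axis i 1 + u $ i *s w else axis i 1)
        = det (\<chi> i. if i = k then axis i 1 + u $ k *s w else ?rest i)"
      by (intro arg_cong[where f = det]) (simp add: vec_eq_iff)
    also have "\<dots> = det (\<chi> i. if i = k then axis i 1 else ?rest i)
        + u $ k * det (\<chi> i. if i = k then w else ?rest i)"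
      by (simp only: det_row_add det_row_mul)
    also have "det (\<chi> i. if i = k then axis i 1 else ?rest i) = 1 + (\<Sum>i\<in>T. u $ i * w $ i)"
    proof -
      have "(\<chi> i. if i = k then axis i 1 else ?rest i) = (\<chi> i. ?rest i)"
        using insert(2) by (simp add: vec_eq_iff)
      then show ?thesis using insert(3) by simp
    qed
    also have "det (\<chi> i. if i = k then w else ?rest i)
        = det (\<chi> i. if i \<in> T then ?a i + u $ i *s ?a k else ?a i)"
      using insert(2) by (intro arg_cong[where f = det]) (simp add: vec_eq_iff)
    also have "\<dots> = w $ k"
      using det_add_multiples_of_row[OF insert(1,2), of ?a "\<lambda>i. u $ i"]
        det_replace_row_of_identity[of k w] by simp
    finally show ?case
      using insert by (simp add: algebra_simps)
  qed
  moreover have "mat 1 + (\<chi> i j. u $ i * w $ j) = (\<chi> i. axis i 1 + u $ i *s w)"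
    by (simp add: vec_eq_iff mat_def axis_def)
  ultimately show ?thesis
    using rank_one_rows[of UNIV] by simp
qed

lemma matrix_inv_right:
  fixes A :: "'a::semiring_1^'n^'n"
  assumes "invertible A"
  shows "A ** matrix_inv A = mat 1"
  using assms unfolding invertible_def matrix_inv_def by (metis (mono_tags, lifting) someI_ex)

lemma invertible_if_coercive:
  fixes A :: "'a::{real_inner,field}^'n^'n"
  assumes coercive: "\<And>x. x \<bullet> x \<le> x \<bullet> (A *v x)"
  shows "invertible A"
proof -
  have "inj ((*v) A)"
  proof (rule injI)
    fix x y
    assume "A *v x = A *v y"
    then have "A *v (x - y) = 0"
      by (simp add: matrix_vector_mult_diff_distrib)
    then have "(x - y) \<bullet> (x - y) \<le> 0"
      using coercive[of "x - y"] by simp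
    then show "x = y"
      by (metis inner_gt_zero_iff not_le right_minus_eq)
  qed
  then show ?thesis
    by (simp add: invertible_left_inverse matrix_left_invertible_injective)
qed

lemma inner_solution_antimono:
  fixes A G :: "'a::real_inner \<Rightarrow> 'a"
  assumes "linear A"
    and self_adjoint: "\<And>x y. x \<bullet> A y = A x \<bullet> y"
    and A_nonneg: "\<And>x. 0 \<le> x \<bullet> A x" and G_nonneg: "\<And>x. 0 \<le> x \<bullet> G x"
    and u: "A u = h" and u': "A u' + G u' = h"
  shows "h \<bullet> u' \<le> h \<bullet> u"
proof -
  have "h \<bullet> u' = u \<bullet> A u'"
    using self_adjoint[of u u'] u inner_commute[of h u'] by simp
  then have "h \<bullet> u - h \<bullet> u' = u \<bullet> G u'"
    using u' inner_commute[of h u] by (simp add: inner_diff_right eq_diff_eq[symmetric])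
  moreover have "A (u - u') = G u'"
    using u u' linear_diff[OF \<open>linear A\<close>, of u u'] by (metis add_diff_cancel_left')
  ultimately have "h \<bullet> u - h \<bullet> u' = (u - u') \<bullet> A (u - u') + u' \<bullet> G u'"
    by (simp add: inner_diff_left)
  then show ?thesis
    using A_nonneg[of "u - u'"] G_nonneg[of u'] by linarith
qed

definition cinner :: "complex^'n \<Rightarrow> complex^'n \<Rightarrow> complex" where
  "cinner x y = (\<Sum>i\<in>UNIV. cnj (x $ i) * y $ i)"

text \<open>The real inner product of \<^typ>\<open>complex^'n\<close> is the real part of the Hermitian one,
  so the real-inner-product argument above applies to Hermitian forms.\<close>

lemma Re_cinner: "Re (cinner x y) = x \<bullet> y"
  by (simp add: cinner_def inner_vec_def inner_complex_def Re_sum)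

lemma cinner_scale_right: "cinner x (c *s y) = c * cinner x y"
  by (simp add: cinner_def sum_distrib_left mult_ac)

lemma cinner_commute: "cinner x y = cnj (cinner y x)"
  by (simp add: cinner_def mult.commute)

lemma cinner_sum_right: "cinner x (\<Sum>k\<in>Y. f k) = (\<Sum>k\<in>Y. cinner x (f k))"
  by (simp add: cinner_def sum_component sum_distrib_left) (rule sum.swap)

lemma outer_H_mult: "outer_H g *v y = cinner g y *s g"
  by (simp add: vec_eq_iff outer_H_def cinner_def matrix_vector_mult_def sum_distrib_left mult_ac)

lemma det_identity_plus_outer_H_mult:
  "det (mat 1 + c *\<^sub>R (outer_H h ** B)) = 1 + of_real c * cinner h (B *v h)"
proof -
  define u where "u = (\<chi> i. of_real c * h $ i)"
  define w where "w = (\<chi> j. \<Sum>k\<in>UNIV. cnj (h $ k) * B $ k $ j)"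
  have "c *\<^sub>R (outer_H h ** B) = (\<chi> i j. u $ i * w $ j)"
    by (simp add: vec_eq_iff matrix_matrix_mult_def outer_H_def u_def w_def sum_distrib_left)
      (simp add: scaleR_conv_of_real sum_distrib_left mult_ac)
  moreover have "(\<Sum>i\<in>UNIV. u $ i * w $ i) = of_real c * cinner h (B *v h)"
    by (simp add: u_def w_def cinner_def matrix_vector_mult_def sum_distrib_left
        sum_distrib_right mult_ac) (rule sum.swap)
  ultimately show ?thesis
    by (simp add: det_identity_plus_rank_one)
qed

lemma inner_gram_sub:
  "x \<bullet> (gram_sub H Y *v y) = (\<Sum>k\<in>Y. Re (cnj (cinner (chan_col H k) x) * cinner (chan_col H k) y))"
proof -
  have "gram_sub H Y *v y = (\<Sum>k\<in>Y. cinner (chan_col H k) y *s chan_col H k)"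
    by (simp add: gram_sub_def vec_eq_iff matrix_vector_mult_def sum_component
        sum_distrib_right outer_H_mult[symmetric]) (intro allI sum.swap)
  then have "x \<bullet> (gram_sub H Y *v y)
      = Re (cinner x (\<Sum>k\<in>Y. cinner (chan_col H k) y *s chan_col H k))"
    by (simp only: Re_cinner)
  then show ?thesis
    by (simp add: cinner_sum_right cinner_scale_right Re_sum
        cinner_commute[of x "chan_col H k" for k] mult.commute)
qed

lemma gram_sub_self_adjoint: "x \<bullet> (gram_sub H Y *v y) = (gram_sub H Y *v x) \<bullet> y"
  by (simp add: inner_gram_sub inner_commute[of _ y] mult.commute)

lemma gram_sub_nonneg: "0 \<le> x \<bullet> (gram_sub H Y *v x)"
  by (simp add: inner_gram_sub sum_nonneg)

definition interference_cov :: "real \<Rightarrow> complex^'k^'m \<Rightarrow> 'k set \<Rightarrow> complex^'m^'m" where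
  "interference_cov c H Y = mat 1 + c *\<^sub>R gram_sub H Y"

lemma scaleR_matrix_vector_mult: "(c *\<^sub>R A) *v x = c *\<^sub>R (A *v (x :: complex^'n))"
  by (simp add: vec_eq_iff matrix_vector_mult_def scaleR_sum_right)

lemma interference_cov_mult: "interference_cov c H Y *v x = x + c *\<^sub>R (gram_sub H Y *v x)"
  by (simp add: interference_cov_def matrix_vector_mult_add_rdistrib scaleR_matrix_vector_mult)

lemma interference_cov_self_adjoint:
  "x \<bullet> (interference_cov c H Y *v y) = (interference_cov c H Y *v x) \<bullet> y"
  by (simp add: interference_cov_mult inner_add_left inner_add_right inner_commute[of _ y]
      gram_sub_self_adjoint)

lemma interference_cov_coercive:
  assumes "0 \<le> c"
  shows "x \<bullet> x \<le> x \<bullet> (interference_cov c H Y *v x)"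
  using assms gram_sub_nonneg[of x H Y] by (simp add: interference_cov_mult inner_add_right)

lemma interference_cov_solve:
  assumes "0 \<le> c"
  shows "interference_cov c H Y *v (matrix_inv (interference_cov c H Y) *v h) = h"
  by (simp add: matrix_vector_mul_assoc
      matrix_inv_right[OF invertible_if_coercive[OF interference_cov_coercive[OF assms]]])

lemma interference_cov_split:
  assumes "Y \<subseteq> Y'"
  shows "interference_cov c H Y' = interference_cov c H Y + c *\<^sub>R gram_sub H (Y' - Y)"
  using sum.subset_diff[OF assms finite, of "\<lambda>k. outer_H (chan_col H k)"]
  by (simp add: interference_cov_def gram_sub_def algebra_simps)

lemma rate_eq_log_quadratic_form:
  "rate P N0 H x Y = log 2 (1 + P / N0 *
     (chan_col H x \<bullet> (matrix_inv (interference_cov (P / N0) H Y) *v chan_col H x)))"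
  by (simp add: rate_def interference_cov_def det_identity_plus_outer_H_mult Re_cinner)

lemma rate_antimono:
  fixes H :: "complex^'k::finite^'m"
  assumes "0 \<le> P / N0"
  shows "antimono (rate P N0 H x)"
proof (rule antimonoI)
  fix Y Y' :: "'k set"
  assume "Y \<subseteq> Y'"
  define c where "c = P / N0"
  define h where "h = chan_col H x"
  define A where "A = interference_cov c H Y"
  define u where "u = matrix_inv A *v h"
  define u' where "u' = matrix_inv (interference_cov c H Y') *v h"
  have "c \<ge> 0" using assms by (simp add: c_def)
  have "interference_cov c H Y' *v u' = h"
    unfolding u'_def by (rule interference_cov_solve[OF \<open>c \<ge> 0\<close>])
  then have u': "A *v u' + (c *\<^sub>R gram_sub H (Y' - Y)) *v u' = h"
    by (simp add: A_def interference_cov_split[OF \<open>Y \<subseteq> Y'\<close>] matrix_vector_mult_add_rdistrib)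
  have "h \<bullet> u' \<le> h \<bullet> u"
  proof (rule inner_solution_antimono[where A = "(*v) A" and G = "(*v) (c *\<^sub>R gram_sub H (Y' - Y))"])
    show "linear ((*v) A)"
      by (rule matrix_vector_mul_linear)
    show "A *v u' + (c *\<^sub>R gram_sub H (Y' - Y)) *v u' = h"
      by (rule u')
    show "x \<bullet> (A *v y) = (A *v x) \<bullet> y" for x y
      unfolding A_def by (rule interference_cov_self_adjoint)
    show "0 \<le> x \<bullet> (A *v x)" for x
      using interference_cov_coercive[OF \<open>c \<ge> 0\<close>, of x H Y] unfolding A_def
      by (meson inner_ge_zero order_trans)
    show "0 \<le> x \<bullet> ((c *\<^sub>R gram_sub H (Y' - Y)) *v x)" for x
      using \<open>c \<ge> 0\<close> gram_sub_nonneg[of x H "Y' - Y"] by (simp add: scaleR_matrix_vector_mult)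
    show "A *v u = h"
      unfolding A_def u_def by (rule interference_cov_solve[OF \<open>c \<ge> 0\<close>])
  qed
  moreover have "0 \<le> h \<bullet> u'"
    using interference_cov_coercive[OF \<open>c \<ge> 0\<close>, of u' H Y'] interference_cov_solve[OF \<open>c \<ge> 0\<close>, of H Y' h]
    by (metis inner_commute inner_ge_zero order_trans u'_def)
  ultimately show "rate P N0 H x Y' \<le> rate P N0 H x Y"
    using \<open>c \<ge> 0\<close> unfolding rate_eq_log_quadratic_form c_def[symmetric] h_def[symmetric]
      A_def[symmetric] u_def[symmetric] u'_def[symmetric]
    by (simp add: mult_left_mono add_pos_nonneg)
qed

lemma length_sic_decoded_ge_iff:
  "n \<le> length (sic_decoded r R xs) \<longleftrightarrow>
     n \<le> length xs \<and> (\<forall>u<n. r (xs ! u) \<le> R (xs ! u) (set (drop (Suc u) xs)))"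
proof (induction xs arbitrary: n)
  case (Cons x xs)
  show ?case
  proof (cases n)
    case (Suc m)
    have "(\<forall>u<Suc m. r ((x # xs) ! u) \<le> R ((x # xs) ! u) (set (drop (Suc u) (x # xs))))
        \<longleftrightarrow> r x \<le> R x (set xs) \<and> (\<forall>u<m. r (xs ! u) \<le> R (xs ! u) (set (drop (Suc u) xs)))"
      by (simp only: All_less_Suc2) simp
    then show ?thesis
      using Cons.IH[of m] Suc by auto
  qed simp
qed auto

lemma take_length_sic_decoded: "take (length (sic_decoded r R xs)) xs = sic_decoded r R xs"
  by (induction xs) auto

lemma card_S_SIC:
  assumes "distinct xs"
  shows "card (S_SIC r R xs) = length (sic_decoded r R xs)"
  using assms distinct_take[of xs] distinct_card take_length_sic_decoded
  unfolding S_SIC_def by metis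

lemma set_drop_Suc_nth:
  assumes "distinct xs" "u < length xs"
  shows "set (drop (Suc u) xs) = set xs - set (take u xs) - {xs ! u}"
proof -
  have split: "take u xs @ xs ! u # drop (Suc u) xs = xs"
    using assms(2) by (rule id_take_nth_drop[symmetric])
  have "distinct (take u xs @ xs ! u # drop (Suc u) xs)"
    unfolding split by (rule assms(1))
  then show ?thesis
    using arg_cong[OF split, of set] by auto
qed

lemma first_index_outside:
  assumes "distinct xs" "finite T" "card T < s" "s \<le> length xs"
  obtains j where "j < s" "xs ! j \<notin> T" "set xs - T - {xs ! j} \<subseteq> set (drop (Suc j) xs)"
proof -
  have "\<not> set (take s xs) \<subseteq> T"
  proof
    assume "set (take s xs) \<subseteq> T"
    then have "card (set (take s xs)) \<le> card T"
      by (rule card_mono[OF assms(2)])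
    then show False
      using assms(1,3,4) by (simp add: distinct_card)
  qed
  then have "\<exists>j. j < s \<and> xs ! j \<notin> T"
    using assms(4) by (auto simp: in_set_conv_nth)
  define j where "j = (LEAST j. j < s \<and> xs ! j \<notin> T)"
  have j: "j < s" "xs ! j \<notin> T"
    using LeastI_ex[OF \<open>\<exists>j. j < s \<and> xs ! j \<notin> T\<close>] unfolding j_def by auto
  have later: "j < i" if "xs ! i \<notin> T" "xs ! i \<noteq> xs ! j" for i
  proof (rule ccontr)
    assume "\<not> j < i"
    with that(2) have "i < j"
      by (cases "i = j") auto
    then have "\<not> (i < s \<and> xs ! i \<notin> T)"
      unfolding j_def by (rule not_less_Least)
    with \<open>i < j\<close> j(1) that(1) show False
      by simp
  qed
  have "set xs - T - {xs ! j} \<subseteq> set (drop (Suc j) xs)"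
  proof
    fix y
    assume y: "y \<in> set xs - T - {xs ! j}"
    then obtain i where i: "i < length xs" "xs ! i = y"
      by (auto simp: in_set_conv_nth)
    with y later have "j < i"
      by auto
    then have "drop (Suc j) xs ! (i - Suc j) = y" "i - Suc j < length (drop (Suc j) xs)"
      using i by auto
    then show "y \<in> set (drop (Suc j) xs)"
      by (metis nth_mem)
  qed
  with j that show ?thesis
    by blast
qed

lemma greedy_order_optimal:
  fixes R :: "'k::finite \<Rightarrow> 'k set \<Rightarrow> real"
  assumes antimono: "\<And>x. antimono (R x)"
    and equal_rates: "\<forall>k. r k = rG"
    and greedy: "greedy_order R ord"
    and "is_order \<sigma>"
  shows "card (S_SIC r R \<sigma>) \<le> card (S_SIC r R ord)"
proof -
  have ord: "distinct ord" "set ord = UNIV" and \<sigma>: "distinct \<sigma>" "set \<sigma> = UNIV"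
    using greedy \<open>is_order \<sigma>\<close> unfolding greedy_order_def is_order_def by auto
  then have "length \<sigma> = length ord"
    by (metis distinct_card)
  define s where "s = length (sic_decoded r R \<sigma>)"
  then have s: "s \<le> length \<sigma>" "\<forall>j<s. rG \<le> R (\<sigma> ! j) (set (drop (Suc j) \<sigma>))"
    using length_sic_decoded_ge_iff[of s r R \<sigma>] equal_rates by auto
  have "r (ord ! u) \<le> R (ord ! u) (set (drop (Suc u) ord))" if "u < s" for u
  proof -
    define T where "T = set (take u ord)"
    have u: "u < length ord" "card T = u"
      using that s(1) \<open>length \<sigma> = length ord\<close> ord(1) by (auto simp: T_def distinct_card)
    obtain j where j: "j < s" "\<sigma> ! j \<notin> T" "UNIV - T - {\<sigma> ! j} \<subseteq> set (drop (Suc j) \<sigma>)"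
      using first_index_outside[OF \<sigma>(1) _ _ s(1), of T] \<open>u < s\<close> u(2) \<sigma>(2) by auto
    have "rG \<le> R (\<sigma> ! j) (set (drop (Suc j) \<sigma>))"
      using s(2) j(1) by blast
    also have "\<dots> \<le> R (\<sigma> ! j) (UNIV - T - {\<sigma> ! j})"
      using antimonoD[OF antimono j(3)] .
    also have "\<dots> \<le> R (ord ! u) (UNIV - T - {ord ! u})"
      using greedy j(2) u(1) unfolding greedy_order_def T_def by blast
    also have "UNIV - T - {ord ! u} = set (drop (Suc u) ord)"
      using set_drop_Suc_nth[OF ord(1) u(1)] ord(2) by (simp add: T_def)
    finally show ?thesis
      using equal_rates by simp
  qed
  then have "s \<le> length (sic_decoded r R ord)"
    unfolding length_sic_decoded_ge_iff using s(1) \<open>length \<sigma> = length ord\<close> by auto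
  then show ?thesis
    using card_S_SIC[OF ord(1)] card_S_SIC[OF \<sigma>(1)] s_def by simp
qed

theorem mainTheorem2:
  fixes H :: "complex^'k::finite^'m::finite"
    and P N0 rG :: real
    and r :: "'k \<Rightarrow> real"
    and ord :: "'k list"
  assumes "P > 0" and "N0 > 0"
    and "\<forall>k. r k = rG"
    and "greedy_order (rate P N0 H) ord"
  shows "\<forall>\<sigma>. is_order \<sigma> \<longrightarrow>
           card (S_SIC r (rate P N0 H) \<sigma>) \<le> card (S_SIC r (rate P N0 H) ord)"
proof (intro allI impI)
  have "0 \<le> P / N0"
    using assms(1,2) by simp
  then show "card (S_SIC r (rate P N0 H) \<sigma>) \<le> card (S_SIC r (rate P N0 H) ord)"
    if "is_order \<sigma>" for \<sigma>
    using greedy_order_optimal[OF rate_antimono assms(3,4) that] by blast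
qed

end
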